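(* Let $(X,m)$ be a $\sigma$-finite measure space, $1<p<\infty$, $\eta>1$, and $\{T_t:t>0\}$ a one-parameter family of sublinear operators on $L^p(X,m)$ with $(x,t)\mapsto T_tf(x)$ measurable. Assume $\|\sup_{t>0}|T_tf|\|_{L^p(X,m)}\le C_p\|f\|_{L^p(X,m)}$ for all $f\in L^p(X,m)$, and $\lim_{t\to0+}T_tf(x)=f(x)$ $m$-a.e. for all $f$ in a dense subclass of $L^p(X,m)$. For $f\in L^p(X,m)$ and $\lambda>0$ let $$\mathcal E_\lambda=\Big\{(x,t)\in X\times(0,1/2):|T_tf(x)|>\lambda\log^{\frac{1-\eta}{p}}(1/t)\Big\}.$$ Then $$\frac{1}{\eta-1}\|f\|_{L^p}^p\le\lim_{\lambda\to\infty}\lambda^p\iint_{\mathcal E_\lambda}t^{-1}\log^{-\eta}(1/t)\,dt\,dm(x)\le\sup_{\lambda>0}\lambda^p\iint_{\mathcal E_\lambda}t^{-1}\log^{-\eta}(1/t)\,dt\,dm(x)\le\frac{C_p^p}{\eta-1}\|f\|_{L^p}^p,$$ where the limit exists.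
   Context: A family of operators is sublinear if $|T_t(f+h)|\le|T_tf|+|T_th|$ and $|T_t(cf)|=|c||T_tf|$. *)

theory Defs
  imports "HOL-Analysis.Analysis"
begin

definition Lp_set :: "'a measure \<Rightarrow> real \<Rightarrow> ('a \<Rightarrow> real) set" where
  "Lp_set M p = {f. f \<in> borel_measurable M \<and> integrable M (\<lambda>x. \<bar>f x\<bar> powr p)}"

definition Lp_norm_pow :: "'a measure \<Rightarrow> real \<Rightarrow> ('a \<Rightarrow> real) \<Rightarrow> real" where
  "Lp_norm_pow M p f = (\<integral>x. \<bar>f x\<bar> powr p \<partial>M)"

definition sublinear_family ::
  "'a measure \<Rightarrow> real \<Rightarrow> (real \<Rightarrow> ('a \<Rightarrow> real) \<Rightarrow> ('a \<Rightarrow> real)) \<Rightarrow> bool" where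
  "sublinear_family M p T \<longleftrightarrow>
     (\<forall>t>0. \<forall>f\<in>Lp_set M p. \<forall>h\<in>Lp_set M p. \<forall>x\<in>space M.
        \<bar>T t (\<lambda>y. f y + h y) x\<bar> \<le> \<bar>T t f x\<bar> + \<bar>T t h x\<bar>) \<and>
     (\<forall>t>0. \<forall>f\<in>Lp_set M p. \<forall>c::real. \<forall>x\<in>space M.
        \<bar>T t (\<lambda>y. c * f y) x\<bar> = \<bar>c\<bar> * \<bar>T t f x\<bar>)"

definition E_set ::
  "'a measure \<Rightarrow> real \<Rightarrow> real \<Rightarrow> (real \<Rightarrow> ('a \<Rightarrow> real) \<Rightarrow> ('a \<Rightarrow> real)) \<Rightarrow> ('a \<Rightarrow> real) \<Rightarrow> real
     \<Rightarrow> ('a \<times> real) set" where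
  "E_set M p \<eta> T f lam = {(x, t). x \<in> space M \<and> 0 < t \<and> t < 1/2 \<and>
      \<bar>T t f x\<bar> > lam * ln (1/t) powr ((1 - \<eta>) / p)}"

definition weighted_E ::
  "'a measure \<Rightarrow> real \<Rightarrow> real \<Rightarrow> (real \<Rightarrow> ('a \<Rightarrow> real) \<Rightarrow> ('a \<Rightarrow> real)) \<Rightarrow> ('a \<Rightarrow> real) \<Rightarrow> real
     \<Rightarrow> ennreal" where
  "weighted_E M p \<eta> T f lam = ennreal (lam powr p) *
     (\<integral>\<^sup>+ z. indicator (E_set M p \<eta> T f lam) z *
        ennreal (1 / (snd z * ln (1 / snd z) powr \<eta>)) \<partial>(M \<Otimes>\<^sub>M lborel))"

end

(*
  For fixed x, the t-integral over the section of E_lambda can be computed exactly when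
  |T_t f(x)| is replaced by a constant s: it equals s^p/(eta - 1) as soon as lambda is large.
  Hence, for f in the dense class, where T_t f(x) -> f(x), the x-integrand tends to
  |f(x)|^p/(eta - 1); it is dominated by sup_t |T_t f(x)|^p/(eta - 1), so dominated convergence
  gives the limit, and the maximal inequality gives the bound for every lambda.
  For general f and d in the dense class, sublinearity gives
  E_lambda(f) \<subseteq> E_((1-theta) lambda)(d) \<union> E_(theta lambda)(f - d), which bounds the limsup and
  the liminf for f by the limit for d, up to factors (1-theta)^(1-2p) and an error of order
  ||f - d||_p^p. Letting d -> f and then theta -> 0 shows that both equal ||f||_p^p/(eta - 1).
*)

theory Submission
  imports Defs
begin

lemma tendsto_if_Limsup_le_Liminf:
  fixes f :: "_ \<Rightarrow> 'a :: {complete_linorder, linorder_topology}"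
  assumes "F \<noteq> bot" "Limsup F f \<le> x" "x \<le> Liminf F f"
  shows "(f \<longlongrightarrow> x) F"
  using assms Liminf_le_Limsup[of F f] by (intro Liminf_eq_Limsup) auto

lemma filterlim_scale_at_top:
  fixes c :: real
  assumes "0 < c"
  shows "filterlim (\<lambda>l. c * l) at_top at_top"
  using assms by (intro filterlim_tendsto_pos_mult_at_top[OF tendsto_const] filterlim_ident)

lemma filtermap_scale_at_top:
  fixes c :: real
  assumes c: "0 < c"
  shows "filtermap (\<lambda>l. c * l) at_top = at_top"
proof (rule filtermap_fun_inverse)
  show "filterlim (\<lambda>l. (1/c) * l) at_top at_top"
    using c by (intro filterlim_scale_at_top) simp
qed (use c in \<open>simp_all add: filterlim_scale_at_top\<close>)

lemma Limsup_at_top_le_rescaled: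
  fixes G H :: "real \<Rightarrow> ennreal" and a b h :: ennreal and c :: real
  assumes c: "0 < c" and a: "a < top" and H: "(H \<longlongrightarrow> h) at_top"
    and le: "eventually (\<lambda>l. G l \<le> a * H (c * l) + b) at_top"
  shows "Limsup at_top G \<le> a * h + b"
proof -
  have "((\<lambda>l. a * H (c * l) + b) \<longlongrightarrow> a * h + b) at_top"
    by (intro tendsto_add tendsto_const ennreal_tendsto_cmult[OF a]
        filterlim_compose[OF H filterlim_scale_at_top[OF c]])
  then have "Limsup at_top (\<lambda>l. a * H (c * l) + b) = a * h + b"
    by (simp add: lim_imp_Limsup)
  with Limsup_mono[OF le] show ?thesis by simp
qed

lemma Liminf_at_top_ge_rescaled:
  fixes G H :: "real \<Rightarrow> ennreal" and a b h :: ennreal and c :: real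
  assumes c: "0 < c" and a: "a < top" and H: "(H \<longlongrightarrow> h) at_top"
    and le: "eventually (\<lambda>l. H l \<le> a * G (c * l) + b) at_top"
  shows "h \<le> a * Liminf at_top G + b"
proof -
  have "h = Liminf at_top H"
    using H by (simp add: lim_imp_Liminf)
  also have "\<dots> \<le> Liminf at_top (\<lambda>l. a * G (c * l) + b)"
    by (rule Liminf_mono[OF le])
  also have "\<dots> = a * Liminf at_top (\<lambda>l. G (c * l)) + b"
    using a by (simp add: Liminf_add_const Liminf_compose_continuous_mono[of "\<lambda>x. a * x"]
        ennreal_continuous_on_cmult continuous_on_id monoI mult_left_mono)
  also have "Liminf at_top (\<lambda>l. G (c * l)) = Liminf at_top G"
    using c by (simp add: Liminf_filtermap_eq[symmetric] inj_on_def filtermap_scale_at_top)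
  finally show ?thesis .
qed

lemma le_if_approximately_le:
  fixes x y c :: real
  assumes "\<And>\<epsilon>. 0 < \<epsilon> \<Longrightarrow> \<exists>e. 0 \<le> e \<and> e < \<epsilon> \<and> x \<le> y + c * e"
  shows "x \<le> y"
proof (rule field_le_epsilon)
  fix \<delta> :: real assume \<delta>: "0 < \<delta>"
  obtain e where e: "0 \<le> e" "e < \<delta> / (\<bar>c\<bar> + 1)" and x: "x \<le> y + c * e"
    using assms[of "\<delta> / (\<bar>c\<bar> + 1)"] \<delta> by auto
  have "c * e \<le> (\<bar>c\<bar> + 1) * e"
    using e by (intro mult_right_mono) auto
  also have "\<dots> \<le> \<delta>"
    using e by (simp add: field_simps)
  finally show "x \<le> y + \<delta>" using x by simp
qed

lemma le_if_le_scaled: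
  fixes x y r :: real
  assumes "\<And>\<theta>. 0 < \<theta> \<Longrightarrow> \<theta> < 1 \<Longrightarrow> x \<le> (1 - \<theta>) powr r * y"
  shows "x \<le> y"
proof -
  have "((\<lambda>\<theta>::real. (1 - \<theta>) powr r * y) \<longlongrightarrow> (1 - 0) powr r * y) (at_right 0)"
    by (intro tendsto_intros) auto
  moreover have "eventually (\<lambda>\<theta>. x \<le> (1 - \<theta>) powr r * y) (at_right (0::real))"
    using assms by (auto simp: eventually_at_right_field intro!: exI[of _ 1])
  ultimately show ?thesis
    by (simp add: tendsto_lowerbound)
qed

text \<open>\<open>S\<close> need not be measurable, so \<open>nn_integral_cmult\<close> is applied to \<open>h / c\<close> instead.\<close>

lemma nn_integral_le_cmult:
  fixes h S :: "'a \<Rightarrow> ennreal" and c :: real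
  assumes h: "h \<in> borel_measurable M" and c: "0 < c"
    and le: "\<And>x. x \<in> space M \<Longrightarrow> h x \<le> ennreal c * S x"
  shows "integral\<^sup>N M h \<le> ennreal c * integral\<^sup>N M S"
proof -
  have c_inv: "ennreal c * ennreal (1/c) = 1"
    using c by (simp add: ennreal_mult[symmetric])
  have "integral\<^sup>N M h = (\<integral>\<^sup>+x. ennreal c * (ennreal (1/c) * h x) \<partial>M)"
    by (simp add: mult.assoc[symmetric] c_inv)
  also have "\<dots> = ennreal c * (\<integral>\<^sup>+x. ennreal (1/c) * h x \<partial>M)"
    using h by (intro nn_integral_cmult) measurable
  also have "\<dots> \<le> ennreal c * integral\<^sup>N M S"
  proof (intro mult_left_mono nn_integral_mono)
    fix x assume "x \<in> space M"
    then have "ennreal (1/c) * h x \<le> ennreal (1/c) * (ennreal c * S x)"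
      by (intro mult_left_mono le) auto
    then show "ennreal (1/c) * h x \<le> S x"
      by (simp add: mult.assoc[symmetric] mult.commute[of "ennreal (1/c)"] c_inv)
  qed simp
  finally show ?thesis .
qed

lemma null_sets_if_nn_integral_finite:
  fixes S :: "'a \<Rightarrow> ennreal"
  assumes N: "N \<in> sets M" and top: "\<And>x. x \<in> N \<Longrightarrow> S x = top" and finite: "integral\<^sup>N M S < top"
  shows "N \<in> null_sets M"
proof -
  have "top * emeasure M N = (\<integral>\<^sup>+x. top * indicator N x \<partial>M)"
    using N by (simp add: nn_integral_cmult_indicator)
  also have "\<dots> \<le> integral\<^sup>N M S"
    by (intro nn_integral_mono) (auto simp: indicator_def top)
  finally have "top * emeasure M N < top"
    using finite by (rule le_less_trans)
  then show ?thesis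
    using N by (auto simp: ennreal_top_mult split: if_splits)
qed

lemma tendsto_nn_integral_at_top_dominated:
  fixes \<Phi> :: "real \<Rightarrow> 'a \<Rightarrow> ennreal" and S :: "'a \<Rightarrow> ennreal" and c :: real
  assumes meas: "\<And>l. \<Phi> l \<in> borel_measurable M" and g: "g \<in> borel_measurable M"
    and lim: "AE x in M. ((\<lambda>l. \<Phi> l x) \<longlongrightarrow> g x) at_top"
    and c: "0 < c" and dom: "\<And>l x. 0 < l \<Longrightarrow> x \<in> space M \<Longrightarrow> \<Phi> l x \<le> ennreal c * S x"
    and S: "integral\<^sup>N M S < top"
  shows "((\<lambda>l. \<integral>\<^sup>+x. \<Phi> l x \<partial>M) \<longlongrightarrow> integral\<^sup>N M g) at_top"
proof (rule tendsto_at_topI_sequentially)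
  fix X :: "nat \<Rightarrow> real" assume X: "filterlim X at_top sequentially"
  define Y where "Y n = max (X n) 1" for n
  have XY: "eventually (\<lambda>n. X n = Y n) sequentially"
    using filterlim_at_top[THEN iffD1, OF X, rule_format, of 1] by eventually_elim (simp add: Y_def)
  then have Y: "filterlim Y at_top sequentially"
    using filterlim_cong[OF refl refl XY] X by simp
  define w where "w x = (SUP n. \<Phi> (Y n) x)" for x
  have "(\<lambda>n. \<integral>\<^sup>+x. \<Phi> (Y n) x \<partial>M) \<longlonglongrightarrow> integral\<^sup>N M g"
  proof (rule nn_integral_dominated_convergence[where w=w])
    show "w \<in> borel_measurable M" unfolding w_def using meas by measurable
    show "AE x in M. \<Phi> (Y n) x \<le> w x" for n
      unfolding w_def by (intro AE_I2 SUP_upper) auto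
    have "integral\<^sup>N M w \<le> ennreal c * integral\<^sup>N M S"
      using c \<open>w \<in> borel_measurable M\<close>
      by (intro nn_integral_le_cmult) (auto simp: w_def Y_def intro!: SUP_least dom)
    also have "\<dots> < top"
      using S by (simp add: ennreal_mult_less_top)
    finally show "integral\<^sup>N M w < \<infinity>" by simp
    show "AE x in M. (\<lambda>n. \<Phi> (Y n) x) \<longlonglongrightarrow> g x"
      using lim by eventually_elim (rule filterlim_compose[OF _ Y])
  qed (use meas g in auto)
  then show "(\<lambda>n. \<integral>\<^sup>+x. \<Phi> (X n) x \<partial>M) \<longlonglongrightarrow> integral\<^sup>N M g"
    by (rule Lim_transform_eventually) (use XY in \<open>auto elim: eventually_mono\<close>)
qed

section \<open>Elementary facts on \<open>L\<^sup>p\<close>\<close>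

lemma abs_add_powr_le:
  fixes a b \<theta> p :: real
  assumes p: "1 \<le> p" and \<theta>: "0 < \<theta>" "\<theta> < 1"
  shows "\<bar>a + b\<bar> powr p \<le> (1 - \<theta>) powr (1 - p) * \<bar>a\<bar> powr p + \<theta> powr (1 - p) * \<bar>b\<bar> powr p"
proof -
  have ge1: "1 \<le> \<theta> powr (1 - p)" "1 \<le> (1 - \<theta>) powr (1 - p)"
    using p \<theta> powr_mono'[of "1 - p" 0 \<theta>] powr_mono'[of "1 - p" 0 "1 - \<theta>"] by auto
  have "\<bar>a + b\<bar> powr p \<le> (\<bar>a\<bar> + \<bar>b\<bar>) powr p"
    using p by (intro powr_mono2) (auto intro: abs_triangle_ineq)
  also have "\<dots> \<le> (1 - \<theta>) powr (1 - p) * \<bar>a\<bar> powr p + \<theta> powr (1 - p) * \<bar>b\<bar> powr p"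
  proof (cases "a = 0 \<or> b = 0")
    case True
    then show ?thesis
      using mult_right_mono[OF ge1(1), of "\<bar>b\<bar> powr p"] mult_right_mono[OF ge1(2), of "\<bar>a\<bar> powr p"]
      by auto
  next
    case False
    then have pos: "0 < \<bar>a\<bar>" "0 < \<bar>b\<bar>" by auto
    have "((1 - \<theta>) *\<^sub>R (\<bar>a\<bar> / (1 - \<theta>)) + \<theta> *\<^sub>R (\<bar>b\<bar> / \<theta>)) powr p
        \<le> (1 - \<theta>) * (\<bar>a\<bar> / (1 - \<theta>)) powr p + \<theta> * (\<bar>b\<bar> / \<theta>) powr p"
      using \<theta> pos by (intro convex_onD[OF powr_convex[OF p]]) auto
    moreover have "(1 - \<theta>) *\<^sub>R (\<bar>a\<bar> / (1 - \<theta>)) + \<theta> *\<^sub>R (\<bar>b\<bar> / \<theta>) = \<bar>a\<bar> + \<bar>b\<bar>"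
      using \<theta> by simp
    moreover have "(1 - \<theta>) * (\<bar>a\<bar> / (1 - \<theta>)) powr p = (1 - \<theta>) powr (1 - p) * \<bar>a\<bar> powr p"
      using \<theta> pos by (simp add: powr_divide powr_diff field_simps)
    moreover have "\<theta> * (\<bar>b\<bar> / \<theta>) powr p = \<theta> powr (1 - p) * \<bar>b\<bar> powr p"
      using \<theta> pos by (simp add: powr_divide powr_diff field_simps)
    ultimately show ?thesis by simp
  qed
  finally show ?thesis .
qed

lemma Lp_norm_pow_nonneg: "0 \<le> Lp_norm_pow M p g"
  unfolding Lp_norm_pow_def by (rule integral_nonneg_AE) simp

lemma Lp_norm_pow_diff_commute: "Lp_norm_pow M p (\<lambda>x. g x - h x) = Lp_norm_pow M p (\<lambda>x. h x - g x)"
  by (simp add: Lp_norm_pow_def abs_minus_commute)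

lemma Lp_set_diff:
  assumes p: "1 \<le> p" and g: "g \<in> Lp_set M p" and h: "h \<in> Lp_set M p"
  shows "(\<lambda>x. g x - h x) \<in> Lp_set M p"
proof -
  have [measurable]: "g \<in> borel_measurable M" "h \<in> borel_measurable M"
    using g h by (auto simp: Lp_set_def)
  have int: "integrable M (\<lambda>x. (1/2) powr (1 - p) * \<bar>g x\<bar> powr p + (1/2) powr (1 - p) * \<bar>h x\<bar> powr p)"
    using g h by (auto simp: Lp_set_def)
  have "\<bar>g x - h x\<bar> powr p \<le> (1/2) powr (1 - p) * \<bar>g x\<bar> powr p + (1/2) powr (1 - p) * \<bar>h x\<bar> powr p" for x
    using abs_add_powr_le[OF p, of "1/2" "g x" "- h x"] by simp
  then have "integrable M (\<lambda>x. \<bar>g x - h x\<bar> powr p)"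
    by (intro Bochner_Integration.integrable_bound[OF int] AE_I2) (auto, measurable)
  then show ?thesis by (simp add: Lp_set_def)
qed

lemma Lp_norm_pow_le_split:
  assumes p: "1 \<le> p" and \<theta>: "0 < \<theta>" "\<theta> < 1" and g: "g \<in> Lp_set M p" and h: "h \<in> Lp_set M p"
  shows "Lp_norm_pow M p g
    \<le> (1 - \<theta>) powr (1 - p) * Lp_norm_pow M p h + \<theta> powr (1 - p) * Lp_norm_pow M p (\<lambda>x. g x - h x)"
proof -
  have gh: "(\<lambda>x. g x - h x) \<in> Lp_set M p" by (rule Lp_set_diff[OF p g h])
  have "Lp_norm_pow M p g
      \<le> (\<integral>x. (1 - \<theta>) powr (1 - p) * \<bar>h x\<bar> powr p + \<theta> powr (1 - p) * \<bar>g x - h x\<bar> powr p \<partial>M)"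
    unfolding Lp_norm_pow_def using g h gh
  proof (intro integral_mono)
    show "\<bar>g x\<bar> powr p \<le> (1 - \<theta>) powr (1 - p) * \<bar>h x\<bar> powr p + \<theta> powr (1 - p) * \<bar>g x - h x\<bar> powr p" for x
      using abs_add_powr_le[OF p \<theta>, of "h x" "g x - h x"] by simp
  qed (auto simp: Lp_set_def)
  also have "\<dots> = (1 - \<theta>) powr (1 - p) * Lp_norm_pow M p h + \<theta> powr (1 - p) * Lp_norm_pow M p (\<lambda>x. g x - h x)"
    using h gh by (simp add: Lp_norm_pow_def Lp_set_def)
  finally show ?thesis .
qed

section \<open>The weight \<open>1 / (t ln\<^sup>\<eta> (1/t))\<close> on \<open>(0, 1/2)\<close>\<close>

lemma has_real_derivative_log_weight_primitive:
  fixes \<eta> t :: real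
  assumes \<eta>: "1 < \<eta>" and t: "0 < t" "t < 1"
  shows "((\<lambda>t. ln (1/t) powr (1 - \<eta>) / (\<eta> - 1)) has_real_derivative 1 / (t * ln (1/t) powr \<eta>)) (at t)"
proof -
  have L: "0 < ln (1/t)" using t by (simp add: ln_div)
  have "((\<lambda>t. ln (1/t) powr (1 - \<eta>) / (\<eta> - 1)) has_real_derivative
      (1 - \<eta>) * ln (1/t) powr (1 - \<eta> - 1) * (- (1/t)) / (\<eta> - 1)) (at t)"
    using t L \<eta> by (auto intro!: derivative_eq_intros)
  also have "(1 - \<eta>) * ln (1/t) powr (1 - \<eta> - 1) * (- (1/t)) / (\<eta> - 1) = 1 / (t * ln (1/t) powr \<eta>)"
  proof -
    have "ln (1/t) powr (1 - \<eta> - 1) = 1 / ln (1/t) powr \<eta>"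
      by (simp add: powr_minus_divide)
    then show ?thesis
      using t L \<eta> by (simp add: field_simps)
  qed
  finally show ?thesis .
qed

lemma nn_integral_log_weight:
  fixes \<eta> c :: real
  assumes \<eta>: "1 < \<eta>" and c: "0 < c" "c < 1"
  shows "(\<integral>\<^sup>+t. indicator {0<..<c} t * ennreal (1 / (t * ln (1/t) powr \<eta>)) \<partial>lborel)
           = ennreal (ln (1/c) powr (1 - \<eta>) / (\<eta> - 1))"
proof -
  let ?w = "\<lambda>t. 1 / (t * ln (1/t) powr \<eta>)"
  let ?F = "\<lambda>t. ln (1/t) powr (1 - \<eta>) / (\<eta> - 1)"
  have deriv: "(?F has_real_derivative ?w t) (at t)" if "0 < ereal t" "ereal t < ereal c" for t
    using that c by (intro has_real_derivative_log_weight_primitive[OF \<eta>]) auto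
  have "filterlim (\<lambda>t. ln (1/t)) at_top (at_right (0::real))"
    using filterlim_compose[OF ln_at_top filterlim_inverse_at_top_right]
    by (simp add: inverse_eq_divide)
  then have "(?F \<longlongrightarrow> 0) (at_right 0)"
    using \<eta> by (intro tendsto_divide_zero tendsto_neg_powr) auto
  then have lim0: "((?F \<circ> real_of_ereal) \<longlongrightarrow> 0) (at_right 0)"
    unfolding zero_ereal_def at_right_ereal filterlim_filtermap comp_def by simp
  have limc: "((?F \<circ> real_of_ereal) \<longlongrightarrow> ?F c) (at_left (ereal c))"
    unfolding at_left_ereal filterlim_filtermap comp_def real_of_ereal.simps
    using c \<eta> by (intro tendsto_intros) (auto simp: ln_div)
  have cont: "isCont ?w t" if "0 < ereal t" "ereal t < ereal c" for t
    using that c by (intro continuous_intros) (auto simp: ln_div)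
  note FTC = interval_integral_FTC_nonneg[of 0 "ereal c", OF _ deriv cont _ lim0 limc]
  have int: "integrable lborel (\<lambda>t. indicator {0<..<c} t * ?w t)"
    using FTC(1) c by (simp add: set_integrable_def zero_ereal_def)
  have "(\<integral>t. indicator {0<..<c} t * ?w t \<partial>lborel) = ?F c"
    using FTC(2) c
    by (simp add: interval_lebesgue_integral_def set_lebesgue_integral_def zero_ereal_def)
  moreover have "(\<integral>\<^sup>+t. indicator {0<..<c} t * ennreal (?w t) \<partial>lborel)
      = ennreal (\<integral>t. indicator {0<..<c} t * ?w t \<partial>lborel)"
    using int c
    by (subst nn_integral_eq_integral[symmetric])
       (auto intro!: nn_integral_cong AE_I2 simp: indicator_def)
  ultimately show ?thesis by simp
qed

lemma powr_less_powr_iff: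
  fixes x y q :: real
  shows "0 < q \<Longrightarrow> 0 \<le> x \<Longrightarrow> 0 \<le> y \<Longrightarrow> x powr q < y powr q \<longleftrightarrow> x < y"
  by (metis antisym_conv3 order.asym powr_less_mono2)

text \<open>With \<open>\<phi> t = \<bar>T t f x\<bar>\<close>, \<open>level_set\<close> is the \<open>x\<close>-section of \<open>E_set\<close> and \<open>section_weight\<close>
  is \<open>\<lambda>\<^sup>p\<close> times its weighted measure.\<close>

definition level_set :: "real \<Rightarrow> real \<Rightarrow> (real \<Rightarrow> real) \<Rightarrow> real \<Rightarrow> real set" where
  "level_set p \<eta> \<phi> l = {t. 0 < t \<and> t < 1/2 \<and> l * ln (1/t) powr ((1 - \<eta>) / p) < \<phi> t}"

definition section_weight :: "real \<Rightarrow> real \<Rightarrow> (real \<Rightarrow> real) \<Rightarrow> real \<Rightarrow> ennreal" where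
  "section_weight p \<eta> \<phi> l = ennreal (l powr p) *
     (\<integral>\<^sup>+t. indicator (level_set p \<eta> \<phi> l) t * ennreal (1 / (t * ln (1/t) powr \<eta>)) \<partial>lborel)"

lemma level_set_const:
  fixes p \<eta> s l :: real
  assumes p: "0 < p" and \<eta>: "1 < \<eta>" and s: "0 < s" and l: "0 < l"
  shows "level_set p \<eta> (\<lambda>_. s) l = {0<..<min (1/2) (exp (- ((l/s) powr (p / (\<eta> - 1)))))}"
proof -
  define q where "q = (\<eta> - 1) / p"
  define b where "b = (l/s) powr (p / (\<eta> - 1))"
  have q: "0 < q" and b: "0 < b" "b powr q = l/s"
    using p \<eta> l s by (auto simp: q_def b_def powr_powr)
  have "l * L powr ((1 - \<eta>) / p) < s \<longleftrightarrow> b < L" if L: "0 < L" for L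
  proof -
    have "(1 - \<eta>) / p = - q"
      by (simp add: q_def minus_divide_left)
    then have "l * L powr ((1 - \<eta>) / p) = l / L powr q"
      by (simp add: powr_minus_divide)
    then have "l * L powr ((1 - \<eta>) / p) < s \<longleftrightarrow> b powr q < L powr q"
      using L s b(2) by (simp add: divide_less_eq mult.commute)
    also have "\<dots> \<longleftrightarrow> b < L"
      using q b L by (intro powr_less_powr_iff) auto
    finally show ?thesis .
  qed
  moreover have "t < exp (- b) \<longleftrightarrow> b < ln (1/t)" if "0 < t" for t
    using that by (metis exp_less_mono exp_total inverse_eq_divide ln_exp ln_inverse
      ln_strict_mono minus_equation_iff neg_less_iff_less)
  ultimately show ?thesis
    unfolding level_set_def b_def[symmetric] by (auto simp: ln_div)
qed

lemma section_weight_const: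
  fixes p \<eta> s l :: real
  assumes p: "0 < p" and \<eta>: "1 < \<eta>" and s: "0 < s" and l: "0 < l"
  defines "b \<equiv> (l/s) powr (p / (\<eta> - 1))"
  shows "section_weight p \<eta> (\<lambda>_. s) l = ennreal (s powr p * max 1 (ln 2 / b) powr (1 - \<eta>) / (\<eta> - 1))"
proof -
  define c where "c = min (1/2) (exp (- b))"
  have c: "0 < c" "c < 1" by (auto simp: c_def)
  have b: "0 < b" using l s by (simp add: b_def)
  have "ln (1/c) = max (ln 2) b"
  proof (cases "ln 2 \<le> b")
    case True
    then have "exp (- b) \<le> 1/2"
      by (metis exp_le_cancel_iff exp_ln exp_minus inverse_eq_divide le_imp_inverse_le zero_less_numeral exp_gt_zero)
    then have "c = exp (- b)" by (simp add: c_def)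
    then show ?thesis using True by (simp add: ln_div)
  next
    case False
    then have "\<not> exp (- b) \<le> 1/2"
      by (metis exp_le_cancel_iff exp_ln exp_minus inverse_eq_divide inverse_le_imp_le zero_less_numeral exp_gt_zero)
    then have "1/c = 2" by (simp add: c_def)
    with False show ?thesis by simp
  qed
  also have "max (ln 2) b = b * max 1 (ln 2 / b)"
    using b by (simp add: max_def field_simps)
  finally have "l powr p * ln (1/c) powr (1 - \<eta>) = l powr p * b powr (1 - \<eta>) * max 1 (ln 2 / b) powr (1 - \<eta>)"
    using b by (simp add: powr_mult)
  also have "l powr p * b powr (1 - \<eta>) = s powr p"
  proof -
    have "p / (\<eta> - 1) * (1 - \<eta>) = - p" using \<eta> by (simp add: field_simps)
    then have "b powr (1 - \<eta>) = (l/s) powr (- p)" by (simp add: b_def powr_powr)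
    then show ?thesis using l s by (simp add: powr_minus powr_divide)
  qed
  finally have key: "l powr p * ln (1/c) powr (1 - \<eta>) = s powr p * max 1 (ln 2 / b) powr (1 - \<eta>)" .
  have "section_weight p \<eta> (\<lambda>_. s) l = ennreal (l powr p) * ennreal (ln (1/c) powr (1 - \<eta>) / (\<eta> - 1))"
    unfolding section_weight_def level_set_const[OF p \<eta> s l] b_def[symmetric] c_def[symmetric]
    by (simp add: nn_integral_log_weight[OF \<eta> c])
  also have "\<dots> = ennreal (s powr p * max 1 (ln 2 / b) powr (1 - \<eta>) / (\<eta> - 1))"
    using \<eta> by (simp add: ennreal_mult[symmetric] key[symmetric] mult.assoc)
  finally show ?thesis .
qed

lemma section_weight_const_le:
  fixes p \<eta> s l :: real
  assumes p: "0 < p" and \<eta>: "1 < \<eta>" and s: "0 \<le> s" and l: "0 < l"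
  shows "section_weight p \<eta> (\<lambda>_. s) l \<le> ennreal (s powr p / (\<eta> - 1))"
proof (cases "s = 0")
  case True
  then have "level_set p \<eta> (\<lambda>_. s) l = {}"
    using l by (auto simp: level_set_def not_less)
  then show ?thesis by (simp add: section_weight_def)
next
  case False
  define b where "b = (l/s) powr (p / (\<eta> - 1))"
  have "max 1 (ln 2 / b) powr (1 - \<eta>) \<le> 1 powr (1 - \<eta>)"
    using \<eta> by (intro powr_mono2') auto
  then have "s powr p * max 1 (ln 2 / b) powr (1 - \<eta>) / (\<eta> - 1) \<le> s powr p / (\<eta> - 1)"
    using \<eta> by (simp add: divide_right_mono mult_left_le)
  then show ?thesis
    using s False by (simp add: section_weight_const[OF p \<eta> _ l] b_def ennreal_leI)
qed

lemma eventually_section_weight_const: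
  fixes p \<eta> s :: real
  assumes p: "0 < p" and \<eta>: "1 < \<eta>" and s: "0 < s"
  shows "eventually (\<lambda>l. section_weight p \<eta> (\<lambda>_. s) l = ennreal (s powr p / (\<eta> - 1))) at_top"
  using eventually_ge_at_top[of "s * ln 2 powr ((\<eta> - 1) / p)"] eventually_gt_at_top[of 0]
proof eventually_elim
  case (elim l)
  have "ln 2 = (ln 2 powr ((\<eta> - 1) / p)) powr (p / (\<eta> - 1))"
    using p \<eta> by (simp add: powr_powr)
  also have "\<dots> \<le> (l/s) powr (p / (\<eta> - 1))"
    using elim s p \<eta> by (intro powr_mono2) (auto simp: field_simps)
  finally have "max 1 (ln 2 / (l/s) powr (p / (\<eta> - 1))) = 1"
    using elim s by (simp add: max_def)
  then show ?case
    using elim s by (simp add: section_weight_const[OF p \<eta> s])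
qed

lemma section_weight_mono_AE:
  assumes "AE t in lborel. t \<in> level_set p \<eta> \<phi> l \<longrightarrow> t \<in> level_set p \<eta> \<psi> l"
  shows "section_weight p \<eta> \<phi> l \<le> section_weight p \<eta> \<psi> l"
  unfolding section_weight_def using assms
  by (intro mult_left_mono nn_integral_mono_AE) (auto simp: indicator_def elim!: eventually_mono)

lemma section_weight_le_bound:
  fixes p \<eta> l :: real and S :: ennreal
  assumes p: "0 < p" and \<eta>: "1 < \<eta>" and l: "0 < l"
    and S: "\<And>t. 0 < t \<Longrightarrow> ennreal (\<bar>\<phi> t\<bar> powr p) \<le> S"
  shows "section_weight p \<eta> \<phi> l \<le> ennreal (1 / (\<eta> - 1)) * S"
proof (cases S)
  case (real s)
  define \<sigma> where "\<sigma> = s powr (1/p)"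
  have "\<phi> t \<le> \<sigma>" if "0 < t" for t
  proof -
    have "\<bar>\<phi> t\<bar> powr p \<le> s" using S[OF that] real by simp
    then have "(\<bar>\<phi> t\<bar> powr p) powr (1/p) \<le> \<sigma>"
      using p by (simp add: \<sigma>_def powr_mono2)
    then show ?thesis using p by (simp add: powr_powr)
  qed
  then have "section_weight p \<eta> \<phi> l \<le> section_weight p \<eta> (\<lambda>_. \<sigma>) l"
    by (intro section_weight_mono_AE AE_I2) (auto simp: level_set_def intro: less_le_trans)
  also have "\<dots> \<le> ennreal (\<sigma> powr p / (\<eta> - 1))"
    using p \<eta> l by (intro section_weight_const_le) (auto simp: \<sigma>_def)
  also have "\<dots> = ennreal (1 / (\<eta> - 1)) * S"
    using real p \<eta> by (simp add: \<sigma>_def powr_powr ennreal_mult[symmetric])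
  finally show ?thesis .
qed (use \<eta> in \<open>simp add: ennreal_mult_top\<close>)

lemma eventually_threshold_gt:
  fixes p \<eta> \<delta> K :: real
  assumes p: "0 < p" and \<eta>: "1 < \<eta>" and \<delta>: "0 < \<delta>"
  shows "eventually (\<lambda>l. \<forall>t. \<delta> \<le> t \<longrightarrow> t < 1/2 \<longrightarrow> K < l * ln (1/t) powr ((1 - \<eta>) / p)) at_top"
proof -
  define e where "e = (1 - \<eta>) / p"
  define L where "L = ln (1 / min \<delta> (1/4))"
  have e: "e \<le> 0" using p \<eta> by (simp add: e_def divide_nonpos_pos)
  have L: "0 < L" using \<delta> by (simp add: L_def ln_div min_def)
  show ?thesis unfolding e_def[symmetric]
    using eventually_gt_at_top[of "max 1 (\<bar>K\<bar> / L powr e)"]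
  proof eventually_elim
    case (elim l)
    then have l: "0 < l" "\<bar>K\<bar> / L powr e < l" by auto
    show ?case
    proof (intro allI impI)
      fix t assume t: "\<delta> \<le> t" "t < 1/2"
      have "ln (1/t) \<le> L" using t \<delta> by (simp add: L_def ln_div min_le_iff_disj)
      moreover have "0 < ln (1/t)" using t \<delta> by (simp add: ln_div)
      ultimately have "L powr e \<le> ln (1/t) powr e"
        using e by (intro powr_mono2') auto
      then have "l * L powr e \<le> l * ln (1/t) powr e"
        using l by (intro mult_left_mono) auto
      moreover have "\<bar>K\<bar> < l * L powr e"
        using l L by (simp add: divide_less_eq)
      ultimately show "K < l * ln (1/t) powr e"
        by linarith
    qed
  qed
qed

lemma eventually_section_weight_le:
  fixes p \<eta> a \<epsilon> K :: real and \<phi> :: "real \<Rightarrow> real"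
  assumes p: "0 < p" and \<eta>: "1 < \<eta>" and a: "0 \<le> a" and \<epsilon>: "0 < \<epsilon>"
    and lim: "(\<phi> \<longlongrightarrow> a) (at_right 0)"
    and bdd: "AE t in lborel. 0 < t \<and> t < 1/2 \<longrightarrow> \<phi> t \<le> K"
  shows "eventually (\<lambda>l. section_weight p \<eta> \<phi> l \<le> ennreal ((a + \<epsilon>) powr p / (\<eta> - 1))) at_top"
proof -
  obtain \<delta> where \<delta>: "0 < \<delta>" and near: "\<And>t. 0 < t \<Longrightarrow> t < \<delta> \<Longrightarrow> \<phi> t < a + \<epsilon>"
    using order_tendstoD(2)[OF lim, of "a + \<epsilon>"] \<epsilon> unfolding eventually_at_right_field by auto
  show ?thesis
    using eventually_threshold_gt[OF p \<eta> \<delta>, of K] eventually_gt_at_top[of 0]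
  proof eventually_elim
    case (elim l)
    note thr = elim(1)
    have "AE t in lborel. t \<in> level_set p \<eta> \<phi> l \<longrightarrow> t \<in> level_set p \<eta> (\<lambda>_. a + \<epsilon>) l"
      using bdd
    proof eventually_elim
      case (elim t)
      show ?case
      proof
        assume "t \<in> level_set p \<eta> \<phi> l"
        then have t: "0 < t" "t < 1/2" and above: "l * ln (1/t) powr ((1 - \<eta>) / p) < \<phi> t"
          by (auto simp: level_set_def)
        have "t < \<delta>"
        proof (rule ccontr)
          assume "\<not> t < \<delta>"
          then have "K < l * ln (1/t) powr ((1 - \<eta>) / p)"
            using thr t by simp
          then show False using elim t above by simp
        qed
        then show "t \<in> level_set p \<eta> (\<lambda>_. a + \<epsilon>) l"
          using near[OF t(1)] t above by (simp add: level_set_def)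
      qed
    qed
    then have "section_weight p \<eta> \<phi> l \<le> section_weight p \<eta> (\<lambda>_. a + \<epsilon>) l"
      by (rule section_weight_mono_AE)
    also have "\<dots> \<le> ennreal ((a + \<epsilon>) powr p / (\<eta> - 1))"
      using p \<eta> a \<epsilon> elim by (intro section_weight_const_le) auto
    finally show ?case .
  qed
qed

lemma eventually_section_weight_ge:
  fixes p \<eta> a \<epsilon> :: real and \<phi> :: "real \<Rightarrow> real"
  assumes p: "0 < p" and \<eta>: "1 < \<eta>" and \<epsilon>: "0 < \<epsilon>" "\<epsilon> < a"
    and lim: "(\<phi> \<longlongrightarrow> a) (at_right 0)"
  shows "eventually (\<lambda>l. ennreal ((a - \<epsilon>) powr p / (\<eta> - 1)) \<le> section_weight p \<eta> \<phi> l) at_top"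
proof -
  obtain \<delta> where \<delta>: "0 < \<delta>" and near: "\<And>t. 0 < t \<Longrightarrow> t < \<delta> \<Longrightarrow> a - \<epsilon> < \<phi> t"
    using order_tendstoD(1)[OF lim, of "a - \<epsilon>"] \<epsilon> unfolding eventually_at_right_field by auto
  have s: "0 < a - \<epsilon>" using \<epsilon> by simp
  show ?thesis
    using eventually_threshold_gt[OF p \<eta> \<delta>, of "a - \<epsilon>"] eventually_section_weight_const[OF p \<eta> s]
  proof eventually_elim
    case (elim l)
    have "level_set p \<eta> (\<lambda>_. a - \<epsilon>) l \<subseteq> level_set p \<eta> \<phi> l"
    proof
      fix t assume "t \<in> level_set p \<eta> (\<lambda>_. a - \<epsilon>) l"
      then have t: "0 < t" "t < 1/2" and below: "l * ln (1/t) powr ((1 - \<eta>) / p) < a - \<epsilon>"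
        by (auto simp: level_set_def)
      have "t < \<delta>"
      proof (rule ccontr)
        assume "\<not> t < \<delta>"
        then have "a - \<epsilon> < l * ln (1/t) powr ((1 - \<eta>) / p)"
          using elim(1) t by simp
        then show False using below by simp
      qed
      then show "t \<in> level_set p \<eta> \<phi> l"
        using near[OF t(1)] t below by (simp add: level_set_def)
    qed
    then have "section_weight p \<eta> (\<lambda>_. a - \<epsilon>) l \<le> section_weight p \<eta> \<phi> l"
      by (intro section_weight_mono_AE AE_I2) auto
    then show ?case using elim(2) by simp
  qed
qed

lemma tendsto_section_weight:
  fixes p \<eta> a K :: real and \<phi> :: "real \<Rightarrow> real"
  assumes p: "0 < p" and \<eta>: "1 < \<eta>" and a: "0 \<le> a"
    and lim: "(\<phi> \<longlongrightarrow> a) (at_right 0)"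
    and bdd: "AE t in lborel. 0 < t \<and> t < 1/2 \<longrightarrow> \<phi> t \<le> K"
  shows "((\<lambda>l. section_weight p \<eta> \<phi> l) \<longlongrightarrow> ennreal (a powr p / (\<eta> - 1))) at_top"
proof (rule tendsto_if_Limsup_le_Liminf)
  have "((\<lambda>\<epsilon>. ennreal ((a + \<epsilon>) powr p / (\<eta> - 1))) \<longlongrightarrow> ennreal ((a + 0) powr p / (\<eta> - 1))) (at_right 0)"
    using p \<eta> a by (intro tendsto_intros) (auto simp: eventually_at_right_field intro!: exI[of _ 1])
  moreover have "eventually (\<lambda>\<epsilon>. Limsup at_top (section_weight p \<eta> \<phi>) \<le> ennreal ((a + \<epsilon>) powr p / (\<eta> - 1))) (at_right 0)"
    using p \<eta> a lim bdd
    by (auto simp: eventually_at_right_field intro!: exI[of _ 1] Limsup_bounded eventually_section_weight_le)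
  ultimately show "Limsup at_top (section_weight p \<eta> \<phi>) \<le> ennreal (a powr p / (\<eta> - 1))"
    by (simp add: tendsto_lowerbound)
next
  show "ennreal (a powr p / (\<eta> - 1)) \<le> Liminf at_top (section_weight p \<eta> \<phi>)"
  proof (cases "a = 0")
    case False
    have "((\<lambda>\<epsilon>. ennreal ((a - \<epsilon>) powr p / (\<eta> - 1))) \<longlongrightarrow> ennreal ((a - 0) powr p / (\<eta> - 1))) (at_right 0)"
      using False \<eta> by (intro tendsto_intros) auto
    moreover have "eventually (\<lambda>\<epsilon>. ennreal ((a - \<epsilon>) powr p / (\<eta> - 1)) \<le> Liminf at_top (section_weight p \<eta> \<phi>)) (at_right 0)"
      using p \<eta> a False lim
      by (auto simp: eventually_at_right_field intro!: exI[of _ a] Liminf_bounded eventually_section_weight_ge)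
    ultimately show ?thesis
      by (simp add: tendsto_upperbound)
  qed simp
qed simp

section \<open>Slicing the double integral\<close>

text \<open>\<open>T\<close> is only measurable for \<open>t > 0\<close>; evaluating at \<open>t = 1\<close> elsewhere gives a function
  on the whole product space.\<close>

lemma borel_measurable_extended_family:
  fixes T :: "real \<Rightarrow> ('a \<Rightarrow> real) \<Rightarrow> 'a \<Rightarrow> real"
  assumes "(\<lambda>(x, t). T t g x) \<in> borel_measurable (M \<Otimes>\<^sub>M restrict_space lborel {0<..})"
  shows "(\<lambda>z. T (if 0 < snd z then snd z else 1) g (fst z)) \<in> borel_measurable (M \<Otimes>\<^sub>M lborel)"
proof -
  have "(\<lambda>z. (fst z, if 0 < snd z then snd z else (1::real)))
      \<in> M \<Otimes>\<^sub>M lborel \<rightarrow>\<^sub>M M \<Otimes>\<^sub>M restrict_space lborel {0<..}"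
  proof (rule measurable_Pair)
    show "(\<lambda>z. if 0 < snd z then snd z else (1::real)) \<in> M \<Otimes>\<^sub>M lborel \<rightarrow>\<^sub>M restrict_space lborel {0<..}"
    proof (rule measurable_restrict_space2)
      show "(\<lambda>z. if 0 < snd z then snd z else (1::real)) \<in> M \<Otimes>\<^sub>M lborel \<rightarrow>\<^sub>M lborel"
        unfolding measurable_lborel2 by measurable
    qed auto
  qed measurable
  from measurable_comp[OF this assms] show ?thesis
    by (simp add: comp_def)
qed

lemma sets_E_set:
  fixes T :: "real \<Rightarrow> ('a \<Rightarrow> real) \<Rightarrow> 'a \<Rightarrow> real"
  assumes "(\<lambda>(x, t). T t g x) \<in> borel_measurable (M \<Otimes>\<^sub>M restrict_space lborel {0<..})"
  shows "E_set M p \<eta> T g l \<in> sets (M \<Otimes>\<^sub>M lborel)"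
proof -
  note [measurable] = borel_measurable_extended_family[where T=T and g=g, OF assms]
  have "E_set M p \<eta> T g l = {z \<in> space (M \<Otimes>\<^sub>M lborel). 0 < snd z \<and> snd z < 1/2 \<and>
      l * ln (1 / snd z) powr ((1 - \<eta>) / p) < \<bar>T (if 0 < snd z then snd z else 1) g (fst z)\<bar>}"
    by (auto simp: E_set_def space_pair_measure)
  also have "\<dots> \<in> sets (M \<Otimes>\<^sub>M lborel)"
    by measurable
  finally show ?thesis .
qed

definition log_density :: "'a measure \<Rightarrow> real \<Rightarrow> ('a \<times> real) measure" where
  "log_density M \<eta> = density (M \<Otimes>\<^sub>M lborel) (\<lambda>z. ennreal (1 / (snd z * ln (1 / snd z) powr \<eta>)))"

lemma weighted_E_eq_emeasure:
  fixes T :: "real \<Rightarrow> ('a \<Rightarrow> real) \<Rightarrow> 'a \<Rightarrow> real"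
  assumes "(\<lambda>(x, t). T t g x) \<in> borel_measurable (M \<Otimes>\<^sub>M restrict_space lborel {0<..})"
  shows "weighted_E M p \<eta> T g l = ennreal (l powr p) * emeasure (log_density M \<eta>) (E_set M p \<eta> T g l)"
  using sets_E_set[where T=T and g=g, OF assms] unfolding weighted_E_def log_density_def
  by (subst emeasure_density) (auto simp: mult.commute)

lemma section_weight_eq_nn_integral_E_set:
  assumes "x \<in> space M"
  shows "section_weight p \<eta> (\<lambda>t. \<bar>T t g x\<bar>) l = ennreal (l powr p) *
    (\<integral>\<^sup>+t. indicator (E_set M p \<eta> T g l) (x, t) * ennreal (1 / (t * ln (1/t) powr \<eta>)) \<partial>lborel)"
  unfolding section_weight_def
  by (intro arg_cong2[where f="(*)"] nn_integral_cong refl)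
     (use assms in \<open>auto simp: indicator_def E_set_def level_set_def\<close>)

lemma borel_measurable_section_weight:
  fixes T :: "real \<Rightarrow> ('a \<Rightarrow> real) \<Rightarrow> 'a \<Rightarrow> real"
  assumes "(\<lambda>(x, t). T t g x) \<in> borel_measurable (M \<Otimes>\<^sub>M restrict_space lborel {0<..})"
  shows "(\<lambda>x. section_weight p \<eta> (\<lambda>t. \<bar>T t g x\<bar>) l) \<in> borel_measurable M"
proof -
  note [measurable] = sets_E_set[where T=T and g=g, OF assms]
  have "(\<lambda>x. ennreal (l powr p) * (\<integral>\<^sup>+t. indicator (E_set M p \<eta> T g l) (x, t)
      * ennreal (1 / (t * ln (1/t) powr \<eta>)) \<partial>lborel)) \<in> borel_measurable M"
    by measurable
  then show ?thesis
    by (rule measurable_cong[THEN iffD1, rotated]) (simp add: section_weight_eq_nn_integral_E_set)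
qed

lemma weighted_E_eq_nn_integral_section_weight:
  fixes T :: "real \<Rightarrow> ('a \<Rightarrow> real) \<Rightarrow> 'a \<Rightarrow> real"
  assumes "(\<lambda>(x, t). T t g x) \<in> borel_measurable (M \<Otimes>\<^sub>M restrict_space lborel {0<..})"
  shows "weighted_E M p \<eta> T g l = (\<integral>\<^sup>+x. section_weight p \<eta> (\<lambda>t. \<bar>T t g x\<bar>) l \<partial>M)"
proof -
  note [measurable] = sets_E_set[where T=T and g=g, OF assms]
  let ?h = "\<lambda>z. indicator (E_set M p \<eta> T g l) z * ennreal (1 / (snd z * ln (1 / snd z) powr \<eta>))"
  have "weighted_E M p \<eta> T g l = ennreal (l powr p) * (\<integral>\<^sup>+x. \<integral>\<^sup>+t. ?h (x, t) \<partial>lborel \<partial>M)"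
    unfolding weighted_E_def by (subst lborel.nn_integral_fst[symmetric]) auto
  also have "\<dots> = (\<integral>\<^sup>+x. ennreal (l powr p) * (\<integral>\<^sup>+t. ?h (x, t) \<partial>lborel) \<partial>M)"
    by (rule nn_integral_cmult[symmetric]) measurable
  also have "\<dots> = (\<integral>\<^sup>+x. section_weight p \<eta> (\<lambda>t. \<bar>T t g x\<bar>) l \<partial>M)"
    by (intro nn_integral_cong) (simp add: section_weight_eq_nn_integral_E_set)
  finally show ?thesis .
qed

lemma AE_bounded_near_zero:
  fixes T :: "real \<Rightarrow> ('a \<Rightarrow> real) \<Rightarrow> 'a \<Rightarrow> real"
  assumes p: "0 < p"
    and meas: "(\<lambda>(x, t). T t g x) \<in> borel_measurable (M \<Otimes>\<^sub>M restrict_space lborel {0<..})"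
    and S_finite: "(\<integral>\<^sup>+ x. (SUP t\<in>{0<..}. ennreal (\<bar>T t g x\<bar> powr p)) \<partial>M) < top"
  shows "AE x in M. \<exists>K. AE t in lborel. 0 < t \<and> t < 1/2 \<longrightarrow> \<bar>T t g x\<bar> \<le> K"
proof -
  note [measurable] = borel_measurable_extended_family[where T=T and g=g, OF meas]
  let ?S = "\<lambda>x. SUP t\<in>{0<..}. ennreal (\<bar>T t g x\<bar> powr p)"
  \<comment> \<open>\<open>?S\<close> need not be measurable; the exceptional set is built from measurable level sets.\<close>
  define G where "G n = {z \<in> space (M \<Otimes>\<^sub>M lborel). 0 < snd z \<and> snd z < 1/2 \<and>
    real n < \<bar>T (if 0 < snd z then snd z else 1) g (fst z)\<bar> powr p}" for n :: nat
  have G_sets[measurable]: "G n \<in> sets (M \<Otimes>\<^sub>M lborel)" for n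
    unfolding G_def by measurable
  have G_section: "Pair x -` G n = {t. 0 < t \<and> t < 1/2 \<and> real n < \<bar>T t g x\<bar> powr p}"
    if "x \<in> space M" for x n
    using that by (auto simp: G_def space_pair_measure)
  define N where "N = {x \<in> space M. \<forall>n. emeasure lborel (Pair x -` G n) \<noteq> 0}"
  have [measurable]: "(\<lambda>x. emeasure lborel (Pair x -` G n)) \<in> borel_measurable M" for n
    by (rule lborel.measurable_emeasure_Pair) measurable
  have [measurable]: "N \<in> sets M"
    unfolding N_def by measurable
  have "?S x = top" if x: "x \<in> N" for x
  proof (rule ennreal_SUP_eq_top)
    fix n
    have "emeasure lborel (Pair x -` G n) \<noteq> 0"
      using x by (simp add: N_def)
    then have "Pair x -` G n \<noteq> {}"
      by (metis emeasure_empty)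
    then obtain t where "0 < t" "real n < \<bar>T t g x\<bar> powr p"
      using x G_section[of x n] by (auto simp: N_def)
    then show "\<exists>t\<in>{0<..}. of_nat n \<le> ennreal (\<bar>T t g x\<bar> powr p)"
      by (intro bexI[of _ t]) (auto simp: ennreal_of_nat_eq_real_of_nat)
  qed
  then have "N \<in> null_sets M"
    by (intro null_sets_if_nn_integral_finite[OF _ _ S_finite]) auto
  then show ?thesis
  proof (rule AE_I', safe)
    fix x assume x: "x \<in> space M" and unbounded: "\<nexists>K. AE t in lborel. 0 < t \<and> t < 1/2 \<longrightarrow> \<bar>T t g x\<bar> \<le> K"
    show "x \<in> N" unfolding N_def
    proof (safe intro!: x)
      fix n assume "emeasure lborel (Pair x -` G n) = 0"
      then have "Pair x -` G n \<in> null_sets lborel"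
        using sets_Pair1[OF G_sets, of x n] by (simp add: null_sets_def)
      then have "AE t in lborel. 0 < t \<and> t < 1/2 \<longrightarrow> \<bar>T t g x\<bar> powr p \<le> real n"
        by (rule AE_I') (auto simp: G_section[OF x])
      then have "AE t in lborel. 0 < t \<and> t < 1/2 \<longrightarrow> \<bar>T t g x\<bar> \<le> real n powr (1/p)"
        by eventually_elim (use p in \<open>auto simp: powr_powr dest: powr_mono2[of "1/p", rotated 2]\<close>)
      with unbounded show False by blast
    qed
  qed
qed

section \<open>Sublinear families with a maximal inequality\<close>

locale maximal_family =
  fixes M :: "'a measure" and p \<eta> C :: real and T :: "real \<Rightarrow> ('a \<Rightarrow> real) \<Rightarrow> 'a \<Rightarrow> real"
  assumes p: "1 < p" and \<eta>: "1 < \<eta>"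
    and sublinear: "sublinear_family M p T"
    and measurable_T: "\<And>g. g \<in> Lp_set M p \<Longrightarrow>
        (\<lambda>(x, t). T t g x) \<in> borel_measurable (M \<Otimes>\<^sub>M restrict_space lborel {0<..})"
    and maximal: "\<And>g. g \<in> Lp_set M p \<Longrightarrow>
        (\<integral>\<^sup>+ x. (SUP t\<in>{0<..}. ennreal (\<bar>T t g x\<bar> powr p)) \<partial>M)
          \<le> ennreal (C powr p * Lp_norm_pow M p g)"
begin

lemma weighted_E_le:
  assumes g: "g \<in> Lp_set M p" and l: "0 < l"
  shows "weighted_E M p \<eta> T g l \<le> ennreal (C powr p / (\<eta> - 1) * Lp_norm_pow M p g)"
proof -
  note meas = measurable_T[OF g]
  let ?S = "\<lambda>x. SUP t\<in>{0<..}. ennreal (\<bar>T t g x\<bar> powr p)"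
  have "weighted_E M p \<eta> T g l = (\<integral>\<^sup>+x. section_weight p \<eta> (\<lambda>t. \<bar>T t g x\<bar>) l \<partial>M)"
    by (rule weighted_E_eq_nn_integral_section_weight[where T=T and g=g, OF meas])
  also have "\<dots> \<le> ennreal (1 / (\<eta> - 1)) * integral\<^sup>N M ?S"
    using p \<eta> l
    by (intro nn_integral_le_cmult borel_measurable_section_weight[where T=T and g=g, OF meas]
        section_weight_le_bound) (auto intro!: SUP_upper)
  also have "\<dots> \<le> ennreal (1 / (\<eta> - 1)) * ennreal (C powr p * Lp_norm_pow M p g)"
    by (intro mult_left_mono maximal[OF g]) simp
  also have "\<dots> = ennreal (C powr p / (\<eta> - 1) * Lp_norm_pow M p g)"
    using \<eta> Lp_norm_pow_nonneg[of M p g] by (simp add: ennreal_mult[symmetric])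
  finally show ?thesis .
qed

lemma E_set_subset_split:
  assumes g: "g \<in> Lp_set M p" and h: "h \<in> Lp_set M p" and \<theta>: "0 < \<theta>" "\<theta> < 1"
  shows "E_set M p \<eta> T g l \<subseteq> E_set M p \<eta> T h ((1 - \<theta>) * l) \<union> E_set M p \<eta> T (\<lambda>y. g y - h y) (\<theta> * l)"
proof safe
  fix x t
  assume gt: "(x, t) \<in> E_set M p \<eta> T g l" and not_gh: "(x, t) \<notin> E_set M p \<eta> T (\<lambda>y. g y - h y) (\<theta> * l)"
  define u where "u = ln (1/t) powr ((1 - \<eta>) / p)"
  from gt have x: "x \<in> space M" and t: "0 < t" "t < 1/2" and "l * u < \<bar>T t g x\<bar>"
    by (auto simp: E_set_def u_def)
  moreover have "\<bar>T t g x\<bar> \<le> \<bar>T t h x\<bar> + \<bar>T t (\<lambda>y. g y - h y) x\<bar>"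
  proof -
    have "(\<lambda>y. g y - h y) \<in> Lp_set M p"
      using p by (intro Lp_set_diff g h) simp
    from sublinear[unfolded sublinear_family_def, THEN conjunct1, rule_format, OF t(1) h this x]
    show ?thesis by simp
  qed
  moreover have "\<bar>T t (\<lambda>y. g y - h y) x\<bar> \<le> \<theta> * l * u"
    using not_gh x t by (auto simp: E_set_def u_def)
  ultimately show "(x, t) \<in> E_set M p \<eta> T h ((1 - \<theta>) * l)"
    using x t by (auto simp: E_set_def u_def algebra_simps)
qed

lemma weighted_E_split:
  assumes g: "g \<in> Lp_set M p" and h: "h \<in> Lp_set M p" and \<theta>: "0 < \<theta>" "\<theta> < 1" and l: "0 < l"
  shows "weighted_E M p \<eta> T g l \<le> ennreal ((1 - \<theta>) powr (- p)) * weighted_E M p \<eta> T h ((1 - \<theta>) * l)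
    + ennreal (\<theta> powr (- p) * (C powr p / (\<eta> - 1) * Lp_norm_pow M p (\<lambda>x. g x - h x)))"
proof -
  let ?\<nu> = "emeasure (log_density M \<eta>)"
  have gh: "(\<lambda>x. g x - h x) \<in> Lp_set M p"
    using p by (intro Lp_set_diff g h) simp
  have sets: "E_set M p \<eta> T k r \<in> sets (log_density M \<eta>)" if "k \<in> Lp_set M p" for k r
    using sets_E_set[where T=T and g=k, OF measurable_T[OF that]] by (simp add: log_density_def)
  have "?\<nu> (E_set M p \<eta> T g l)
      \<le> ?\<nu> (E_set M p \<eta> T h ((1 - \<theta>) * l)) + ?\<nu> (E_set M p \<eta> T (\<lambda>x. g x - h x) (\<theta> * l))"
    using E_set_subset_split[OF g h \<theta>, of l] sets[OF h] sets[OF gh]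
    by (intro order_trans[OF emeasure_mono emeasure_subadditive]) auto
  then have "weighted_E M p \<eta> T g l \<le> ennreal (l powr p) *
      (?\<nu> (E_set M p \<eta> T h ((1 - \<theta>) * l)) + ?\<nu> (E_set M p \<eta> T (\<lambda>x. g x - h x) (\<theta> * l)))"
    unfolding weighted_E_eq_emeasure[where T=T and g=g, OF measurable_T[OF g]]
    by (rule mult_left_mono) simp
  also have "\<dots> = ennreal ((1 - \<theta>) powr (- p)) * weighted_E M p \<eta> T h ((1 - \<theta>) * l)
      + ennreal (\<theta> powr (- p)) * weighted_E M p \<eta> T (\<lambda>x. g x - h x) (\<theta> * l)"
  proof -
    have scale1: "ennreal (l powr p) = ennreal ((1 - \<theta>) powr (- p)) * ennreal (((1 - \<theta>) * l) powr p)"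
      and scale2: "ennreal (l powr p) = ennreal (\<theta> powr (- p)) * ennreal ((\<theta> * l) powr p)"
      using \<theta> l by (simp_all add: ennreal_mult[symmetric] powr_mult powr_minus)
    show ?thesis
      unfolding weighted_E_eq_emeasure[where T=T and g=h, OF measurable_T[OF h]]
        weighted_E_eq_emeasure[where T=T and g="\<lambda>x. g x - h x", OF measurable_T[OF gh]]
        distrib_left
      by (subst (1) scale1, subst scale2) (simp add: mult.assoc)
  qed
  also have "\<dots> \<le> ennreal ((1 - \<theta>) powr (- p)) * weighted_E M p \<eta> T h ((1 - \<theta>) * l)
      + ennreal (\<theta> powr (- p)) * ennreal (C powr p / (\<eta> - 1) * Lp_norm_pow M p (\<lambda>x. g x - h x))"
    using \<theta> l by (intro add_left_mono mult_left_mono weighted_E_le[OF gh]) auto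
  also have "ennreal (\<theta> powr (- p)) * ennreal (C powr p / (\<eta> - 1) * Lp_norm_pow M p (\<lambda>x. g x - h x))
      = ennreal (\<theta> powr (- p) * (C powr p / (\<eta> - 1) * Lp_norm_pow M p (\<lambda>x. g x - h x)))"
    using \<eta> Lp_norm_pow_nonneg[of M p "\<lambda>x. g x - h x"] by (intro ennreal_mult[symmetric]) auto
  finally show ?thesis .
qed

lemma tendsto_weighted_E:
  assumes d: "d \<in> Lp_set M p" and conv: "AE x in M. ((\<lambda>t. T t d x) \<longlongrightarrow> d x) (at_right 0)"
  shows "((\<lambda>l. weighted_E M p \<eta> T d l) \<longlongrightarrow> ennreal (Lp_norm_pow M p d / (\<eta> - 1))) at_top"
proof -
  note meas = measurable_T[OF d]
  have [measurable]: "d \<in> borel_measurable M" and int: "integrable M (\<lambda>x. \<bar>d x\<bar> powr p)"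
    using d by (auto simp: Lp_set_def)
  have S_finite: "(\<integral>\<^sup>+ x. (SUP t\<in>{0<..}. ennreal (\<bar>T t d x\<bar> powr p)) \<partial>M) < top"
    using maximal[OF d] by (simp add: le_less_trans)
  have p0: "0 < p" using p by simp
  have pointwise: "AE x in M. ((\<lambda>l. section_weight p \<eta> (\<lambda>t. \<bar>T t d x\<bar>) l) \<longlongrightarrow> ennreal (\<bar>d x\<bar> powr p / (\<eta> - 1))) at_top"
    using conv AE_bounded_near_zero[where T=T and g=d, OF p0 meas S_finite]
  proof eventually_elim
    case (elim x)
    then obtain K where "AE t in lborel. 0 < t \<and> t < 1/2 \<longrightarrow> \<bar>T t d x\<bar> \<le> K" by auto
    with elim p \<eta> show ?case
      by (intro tendsto_section_weight tendsto_rabs) auto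
  qed
  have "((\<lambda>l. \<integral>\<^sup>+x. section_weight p \<eta> (\<lambda>t. \<bar>T t d x\<bar>) l \<partial>M)
      \<longlongrightarrow> (\<integral>\<^sup>+x. ennreal (\<bar>d x\<bar> powr p / (\<eta> - 1)) \<partial>M)) at_top"
  proof (rule tendsto_nn_integral_at_top_dominated[OF _ _ pointwise _ _ S_finite])
    show "section_weight p \<eta> (\<lambda>t. \<bar>T t d x\<bar>) l
        \<le> ennreal (1 / (\<eta> - 1)) * (SUP t\<in>{0<..}. ennreal (\<bar>T t d x\<bar> powr p))" if "0 < l" for l x
      using p \<eta> that by (intro section_weight_le_bound) (auto intro!: SUP_upper)
  qed (use \<eta> borel_measurable_section_weight[where T=T and g=d, OF meas] in auto)
  moreover have "(\<integral>\<^sup>+x. ennreal (\<bar>d x\<bar> powr p / (\<eta> - 1)) \<partial>M) = ennreal (Lp_norm_pow M p d / (\<eta> - 1))"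
    using int \<eta> by (subst nn_integral_eq_integral) (auto simp: Lp_norm_pow_def)
  ultimately show ?thesis
    by (simp add: weighted_E_eq_nn_integral_section_weight[where T=T and g=d, OF meas])
qed

lemma Limsup_weighted_E_finite:
  assumes f: "f \<in> Lp_set M p"
  shows "Limsup at_top (weighted_E M p \<eta> T f) < top"
proof -
  have "Limsup at_top (weighted_E M p \<eta> T f) \<le> ennreal (C powr p / (\<eta> - 1) * Lp_norm_pow M p f)"
    using weighted_E_le[OF f] by (intro Limsup_bounded eventually_mono[OF eventually_gt_at_top[of 0]])
  then show ?thesis
    by (rule le_less_trans) simp
qed

lemma Limsup_weighted_E_le_approx:
  assumes f: "f \<in> Lp_set M p" and d: "d \<in> Lp_set M p"
    and conv: "AE x in M. ((\<lambda>t. T t d x) \<longlongrightarrow> d x) (at_right 0)"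
    and \<theta>: "0 < \<theta>" "\<theta> < 1" and U: "Limsup at_top (weighted_E M p \<eta> T f) = ennreal U"
  shows "U \<le> (1 - \<theta>) powr (1 - 2 * p) * (Lp_norm_pow M p f / (\<eta> - 1))
    + ((1 - \<theta>) powr (- p) * \<theta> powr (1 - p) / (\<eta> - 1) + \<theta> powr (- p) * (C powr p / (\<eta> - 1)))
      * Lp_norm_pow M p (\<lambda>x. f x - d x)"
proof -
  define A where "A = (1 - \<theta>) powr (- p)"
  define P where "P = (1 - \<theta>) powr (1 - p)"
  define Q where "Q = \<theta> powr (1 - p)"
  define B where "B = \<theta> powr (- p)"
  define K where "K = C powr p / (\<eta> - 1)"
  define N where "N = Lp_norm_pow M p f"
  define e where "e = Lp_norm_pow M p (\<lambda>x. f x - d x)"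
  have e: "0 \<le> e" by (simp add: e_def Lp_norm_pow_nonneg)
  have "ennreal U \<le> ennreal A * ennreal (Lp_norm_pow M p d / (\<eta> - 1)) + ennreal (B * (K * e))"
    unfolding U[symmetric] A_def B_def K_def e_def
    using weighted_E_split[OF f d \<theta>] \<theta>
    by (intro Limsup_at_top_le_rescaled[where c="1 - \<theta>", OF _ _ tendsto_weighted_E[OF d conv]]
        eventually_mono[OF eventually_gt_at_top[of 0]]) auto
  then have "U \<le> A * (Lp_norm_pow M p d / (\<eta> - 1)) + B * (K * e)"
    using \<eta> e by (simp add: A_def B_def K_def ennreal_mult[symmetric] ennreal_plus[symmetric]
        Lp_norm_pow_nonneg del: ennreal_plus)
  moreover have "Lp_norm_pow M p d \<le> P * N + Q * e"
    using Lp_norm_pow_le_split[OF _ \<theta> d f] p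
    unfolding Lp_norm_pow_diff_commute[of M p d f] by (simp add: P_def Q_def N_def e_def)
  then have "A * (Lp_norm_pow M p d / (\<eta> - 1)) \<le> A * ((P * N + Q * e) / (\<eta> - 1))"
    using \<eta> by (intro mult_left_mono divide_right_mono) (auto simp: A_def)
  ultimately have "U \<le> A * ((P * N + Q * e) / (\<eta> - 1)) + B * (K * e)"
    by linarith
  also have "\<dots> = A * P * (N / (\<eta> - 1)) + (A * Q / (\<eta> - 1) + B * K) * e"
    by (simp add: algebra_simps add_divide_distrib)
  also have "A * P = (1 - \<theta>) powr (1 - 2 * p)"
    using \<theta> by (simp add: A_def P_def powr_add[symmetric])
  finally show ?thesis
    by (simp add: A_def B_def K_def N_def Q_def e_def)
qed

lemma Liminf_weighted_E_ge_approx: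
  assumes f: "f \<in> Lp_set M p" and d: "d \<in> Lp_set M p"
    and conv: "AE x in M. ((\<lambda>t. T t d x) \<longlongrightarrow> d x) (at_right 0)"
    and \<theta>: "0 < \<theta>" "\<theta> < 1" and L: "Liminf at_top (weighted_E M p \<eta> T f) = ennreal L" "0 \<le> L"
  shows "Lp_norm_pow M p f / (\<eta> - 1) \<le> (1 - \<theta>) powr (1 - 2 * p) * L
    + ((1 - \<theta>) powr (1 - p) * \<theta> powr (- p) * (C powr p / (\<eta> - 1)) + \<theta> powr (1 - p) / (\<eta> - 1))
      * Lp_norm_pow M p (\<lambda>x. f x - d x)"
proof -
  define A where "A = (1 - \<theta>) powr (- p)"
  define P where "P = (1 - \<theta>) powr (1 - p)"
  define Q where "Q = \<theta> powr (1 - p)"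
  define B where "B = \<theta> powr (- p)"
  define K where "K = C powr p / (\<eta> - 1)"
  define N where "N = Lp_norm_pow M p f"
  define e where "e = Lp_norm_pow M p (\<lambda>x. f x - d x)"
  have e: "0 \<le> e" by (simp add: e_def Lp_norm_pow_nonneg)
  have "ennreal (Lp_norm_pow M p d / (\<eta> - 1)) \<le> ennreal A * ennreal L + ennreal (B * (K * e))"
    unfolding L(1)[symmetric] A_def B_def K_def e_def Lp_norm_pow_diff_commute[of M p f d]
    using weighted_E_split[OF d f \<theta>] \<theta>
    by (intro Liminf_at_top_ge_rescaled[where c="1 - \<theta>", OF _ _ tendsto_weighted_E[OF d conv]]
        eventually_mono[OF eventually_gt_at_top[of 0]]) auto
  then have d_le: "Lp_norm_pow M p d / (\<eta> - 1) \<le> A * L + B * (K * e)"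
    using \<eta> e L(2) by (simp add: A_def B_def K_def ennreal_mult[symmetric] ennreal_plus[symmetric]
        Lp_norm_pow_nonneg del: ennreal_plus)
  have "N \<le> P * Lp_norm_pow M p d + Q * e"
    using Lp_norm_pow_le_split[OF _ \<theta> f d] p by (simp add: P_def Q_def N_def e_def)
  then have "N / (\<eta> - 1) \<le> (P * Lp_norm_pow M p d + Q * e) / (\<eta> - 1)"
    using \<eta> by (intro divide_right_mono) auto
  also have "\<dots> = P * (Lp_norm_pow M p d / (\<eta> - 1)) + Q * e / (\<eta> - 1)"
    by (simp add: add_divide_distrib)
  also have "\<dots> \<le> P * (A * L + B * (K * e)) + Q * e / (\<eta> - 1)"
    using d_le by (intro add_right_mono mult_left_mono) (auto simp: P_def)
  also have "\<dots> = P * A * L + (P * B * K + Q / (\<eta> - 1)) * e"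
    by (simp add: algebra_simps)
  also have "P * A = (1 - \<theta>) powr (1 - 2 * p)"
    using \<theta> by (simp add: A_def P_def powr_add[symmetric])
  finally show ?thesis
    by (simp add: B_def K_def N_def P_def Q_def e_def)
qed

lemma Limsup_weighted_E_le:
  assumes f: "f \<in> Lp_set M p"
    and approx: "\<And>\<epsilon>. 0 < \<epsilon> \<Longrightarrow> \<exists>d\<in>Lp_set M p. Lp_norm_pow M p (\<lambda>x. f x - d x) < \<epsilon> \<and>
        (AE x in M. ((\<lambda>t. T t d x) \<longlongrightarrow> d x) (at_right 0))"
  shows "Limsup at_top (weighted_E M p \<eta> T f) \<le> ennreal (Lp_norm_pow M p f / (\<eta> - 1))"
proof -
  obtain U where U: "Limsup at_top (weighted_E M p \<eta> T f) = ennreal U"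
    using Limsup_weighted_E_finite[OF f] by (cases "Limsup at_top (weighted_E M p \<eta> T f)") auto
  have "U \<le> (1 - \<theta>) powr (1 - 2 * p) * (Lp_norm_pow M p f / (\<eta> - 1))" if \<theta>: "0 < \<theta>" "\<theta> < 1" for \<theta>
  proof (rule le_if_approximately_le)
    fix \<epsilon> :: real assume "0 < \<epsilon>"
    with approx obtain d where "d \<in> Lp_set M p" "Lp_norm_pow M p (\<lambda>x. f x - d x) < \<epsilon>"
      and "AE x in M. ((\<lambda>t. T t d x) \<longlongrightarrow> d x) (at_right 0)"
      by blast
    with Limsup_weighted_E_le_approx[OF f _ _ \<theta> U] Lp_norm_pow_nonneg
    show "\<exists>e. 0 \<le> e \<and> e < \<epsilon> \<and> U \<le> (1 - \<theta>) powr (1 - 2 * p) * (Lp_norm_pow M p f / (\<eta> - 1))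
        + ((1 - \<theta>) powr (- p) * \<theta> powr (1 - p) / (\<eta> - 1) + \<theta> powr (- p) * (C powr p / (\<eta> - 1))) * e"
      by blast
  qed
  then have "U \<le> Lp_norm_pow M p f / (\<eta> - 1)"
    by (rule le_if_le_scaled)
  then show ?thesis
    using U by (simp add: ennreal_leI)
qed

lemma Liminf_weighted_E_ge:
  assumes f: "f \<in> Lp_set M p"
    and approx: "\<And>\<epsilon>. 0 < \<epsilon> \<Longrightarrow> \<exists>d\<in>Lp_set M p. Lp_norm_pow M p (\<lambda>x. f x - d x) < \<epsilon> \<and>
        (AE x in M. ((\<lambda>t. T t d x) \<longlongrightarrow> d x) (at_right 0))"
  shows "ennreal (Lp_norm_pow M p f / (\<eta> - 1)) \<le> Liminf at_top (weighted_E M p \<eta> T f)"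
proof -
  have "Liminf at_top (weighted_E M p \<eta> T f) \<le> Limsup at_top (weighted_E M p \<eta> T f)"
    by (rule Liminf_le_Limsup) simp
  then have "Liminf at_top (weighted_E M p \<eta> T f) < top"
    using Limsup_weighted_E_finite[OF f] by (rule le_less_trans)
  then obtain L where L: "Liminf at_top (weighted_E M p \<eta> T f) = ennreal L" "0 \<le> L"
    by (cases "Liminf at_top (weighted_E M p \<eta> T f)") auto
  have "Lp_norm_pow M p f / (\<eta> - 1) \<le> (1 - \<theta>) powr (1 - 2 * p) * L" if \<theta>: "0 < \<theta>" "\<theta> < 1" for \<theta>
  proof (rule le_if_approximately_le)
    fix \<epsilon> :: real assume "0 < \<epsilon>"
    with approx obtain d where "d \<in> Lp_set M p" "Lp_norm_pow M p (\<lambda>x. f x - d x) < \<epsilon>"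
      and "AE x in M. ((\<lambda>t. T t d x) \<longlongrightarrow> d x) (at_right 0)"
      by blast
    with Liminf_weighted_E_ge_approx[OF f _ _ \<theta> L] Lp_norm_pow_nonneg
    show "\<exists>e. 0 \<le> e \<and> e < \<epsilon> \<and> Lp_norm_pow M p f / (\<eta> - 1) \<le> (1 - \<theta>) powr (1 - 2 * p) * L
        + ((1 - \<theta>) powr (1 - p) * \<theta> powr (- p) * (C powr p / (\<eta> - 1)) + \<theta> powr (1 - p) / (\<eta> - 1)) * e"
      by blast
  qed
  then have "Lp_norm_pow M p f / (\<eta> - 1) \<le> L"
    by (rule le_if_le_scaled)
  then show ?thesis
    using L by simp
qed

end

theorem mainTheorem4:
  fixes M :: "'a measure" and p \<eta> C :: real
    and T :: "real \<Rightarrow> ('a \<Rightarrow> real) \<Rightarrow> ('a \<Rightarrow> real)"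
    and f :: "'a \<Rightarrow> real"
  assumes sf: "sigma_finite_measure M"
    and p: "1 < p" and eta: "1 < \<eta>" and C: "0 \<le> C"
    and sub: "sublinear_family M p T"
    and meas: "\<And>g. g \<in> Lp_set M p \<Longrightarrow>
        (\<lambda>(x, t). T t g x) \<in> borel_measurable (M \<Otimes>\<^sub>M restrict_space lborel {0<..})"
    and maximal: "\<And>g. g \<in> Lp_set M p \<Longrightarrow>
        (\<integral>\<^sup>+ x. (SUP t\<in>{0<..}. ennreal (\<bar>T t g x\<bar> powr p)) \<partial>M)
          \<le> ennreal (C powr p * Lp_norm_pow M p g)"
    and dense: "\<exists>D \<subseteq> Lp_set M p.
        (\<forall>g\<in>Lp_set M p. \<forall>\<epsilon>>0. \<exists>d\<in>D. Lp_norm_pow M p (\<lambda>x. g x - d x) < \<epsilon>) \<and>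
        (\<forall>d\<in>D. AE x in M. ((\<lambda>t. T t d x) \<longlongrightarrow> d x) (at_right 0))"
    and f: "f \<in> Lp_set M p"
  shows "\<exists>L. ((\<lambda>l. weighted_E M p \<eta> T f l) \<longlongrightarrow> L) at_top \<and>
      ennreal (Lp_norm_pow M p f / (\<eta> - 1)) \<le> L \<and>
      L \<le> (SUP l\<in>{0<..}. weighted_E M p \<eta> T f l) \<and>
      (SUP l\<in>{0<..}. weighted_E M p \<eta> T f l) \<le> ennreal (C powr p / (\<eta> - 1) * Lp_norm_pow M p f)"
proof -
  interpret maximal_family M p \<eta> C T
    using p eta sub meas maximal by unfold_locales
  obtain D where "D \<subseteq> Lp_set M p"
    and "\<forall>g\<in>Lp_set M p. \<forall>\<epsilon>>0. \<exists>d\<in>D. Lp_norm_pow M p (\<lambda>x. g x - d x) < \<epsilon>"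
    and "\<forall>d\<in>D. AE x in M. ((\<lambda>t. T t d x) \<longlongrightarrow> d x) (at_right 0)"
    using dense by blast
  with f have approx: "\<And>\<epsilon>. 0 < \<epsilon> \<Longrightarrow> \<exists>d\<in>Lp_set M p. Lp_norm_pow M p (\<lambda>x. f x - d x) < \<epsilon> \<and>
      (AE x in M. ((\<lambda>t. T t d x) \<longlongrightarrow> d x) (at_right 0))"
    by blast
  let ?L = "ennreal (Lp_norm_pow M p f / (\<eta> - 1))"
  have lim: "(weighted_E M p \<eta> T f \<longlongrightarrow> ?L) at_top"
    using Limsup_weighted_E_le[OF f approx] Liminf_weighted_E_ge[OF f approx]
    by (intro tendsto_if_Limsup_le_Liminf) auto
  moreover have "?L \<le> (SUP l\<in>{0<..}. weighted_E M p \<eta> T f l)"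
    by (intro tendsto_upperbound[OF lim] eventually_mono[OF eventually_gt_at_top[of 0]] SUP_upper) auto
  moreover have "(SUP l\<in>{0<..}. weighted_E M p \<eta> T f l) \<le> ennreal (C powr p / (\<eta> - 1) * Lp_norm_pow M p f)"
    using weighted_E_le[OF f] by (intro SUP_least) auto
  ultimately show ?thesis
    by blast
qed

end
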